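(* Let $p\in(1,+\infty]$ and $q\in[1,+\infty)$ with $p^{-1}+q^{-1}=1$. Let $f\colon[0,1]\times\mathbb R\to\mathbb R$ satisfy: for every $u\in\mathbb R$, $t\mapsto f(t,u)$ is Lebesgue measurable; for a.e. $t\in[0,1]$, $u\mapsto f(t,u)$ is continuous; and there exist a non-decreasing $\psi\colon[0,+\infty)\to[0,+\infty)$ and $\phi\in L^p([0,1])$, $\phi\ge0$, with $|f(t,u)|\le\phi(t)\psi(|u|)$ for $t\in[0,1]$, $u\in\mathbb R$. Let $k\colon[0,1]\times[0,1]\to\mathbb R$ satisfy: for every $t\in[0,1]$, $s\mapsto k(t,s)$ belongs to $L^q([0,1])$; there is $m\in L^q([0,1])$, $m\ge0$, with $\operatorname{var}_{[0,1]}k(\cdot,s)\le m(s)$ for a.e. $s\in[0,1]$; and for every $\tau\in[0,1]$, $\lim_{t\to\tau}\int_0^1|k(t,s)-k(\tau,s)|\phi(s)\,ds=0$. Then the mapping $F_2(x)(t)=\int_0^1k(t,s)f(s,x(s))\,ds$, $t\in[0,1]$, is a well-defined completely continuous mapping $F_2\colon BV[0,1]\to CBV[0,1]$.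
   Context: $BV[0,1]$ is the Banach space of real functions of bounded Jordan variation on $[0,1]$ with norm $\|f\|_{BV}=|f(0)|+\operatorname{var}_{[0,1]}f$ ($\operatorname{var}$ denoting Jordan variation); $CBV[0,1]$ is its closed subspace of continuous functions. Completely continuous means continuous and mapping bounded sets into relatively compact sets. *)

theory Defs
  imports "HOL-Analysis.Analysis"
begin

definition partitions :: "real \<Rightarrow> real \<Rightarrow> real list set" where
  "partitions a b = {xs. sorted xs \<and> set xs \<subseteq> {a..b}}"

definition pvar :: "(real \<Rightarrow> real) \<Rightarrow> real list \<Rightarrow> real" where
  "pvar g xs = (\<Sum>i<length xs - 1. \<bar>g (xs ! Suc i) - g (xs ! i)\<bar>)"

definition variation :: "real \<Rightarrow> real \<Rightarrow> (real \<Rightarrow> real) \<Rightarrow> ereal" where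
  "variation a b g = (SUP xs \<in> partitions a b. ereal (pvar g xs))"

text \<open>BV[0,1] (functions are only considered on [0,1]) and its norm.\<close>

definition BV :: "(real \<Rightarrow> real) set" where
  "BV = {g. variation 0 1 g < \<infinity>}"

definition bv_norm :: "(real \<Rightarrow> real) \<Rightarrow> real" where
  "bv_norm g = \<bar>g 0\<bar> + real_of_ereal (variation 0 1 g)"

definition CBV :: "(real \<Rightarrow> real) set" where
  "CBV = {g \<in> BV. continuous_on {0..1} g}"

definition in_Lp :: "ereal \<Rightarrow> (real \<Rightarrow> real) \<Rightarrow> bool" where
  "in_Lp p g \<longleftrightarrow> set_borel_measurable lebesgue {0..1} g \<and>
     (if p = \<infinity> then (\<exists>C. AE s in lebesgue. s \<in> {0..1} \<longrightarrow> \<bar>g s\<bar> \<le> C)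
      else set_integrable lebesgue {0..1} (\<lambda>s. \<bar>g s\<bar> powr real_of_ereal p))"

definition F2 :: "(real \<Rightarrow> real \<Rightarrow> real) \<Rightarrow> (real \<Rightarrow> real \<Rightarrow> real) \<Rightarrow> (real \<Rightarrow> real) \<Rightarrow> real \<Rightarrow> real" where
  "F2 k f x = (\<lambda>t. LINT s:{0..1}|lebesgue. k t s * f s (x s))"

end

theory Submission
  imports Defs "HOL-Probability.Helly_Selection"
begin

text \<open>\<open>F\<^sub>2\<close> is the linear integral operator with kernel k applied to the superposition
  \<open>s \<mapsto> f(s, x(s))\<close>, and for bounded measurable x the latter is dominated by a multiple of \<phi>.
  For such a d the image \<open>t \<mapsto> \<integral> k(t,s) d(s) ds\<close> is continuous by the continuity hypothesis
  on k, and its variation is at most \<open>\<integral> m |d|\<close> because the variation of k in t is bounded by m;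
  these integrals are finite by Young's inequality for the conjugate exponents p and q. Hence the
  BV norm of the image is at most \<open>\<integral> (|k(0,s)| + m(s)) |d(s)| ds\<close>, and dominated convergence shows
  that a.e. convergence of uniformly bounded arguments \<open>x\<^sub>n \<rightarrow> x\<close> gives \<open>F\<^sub>2 x\<^sub>n \<rightarrow> F\<^sub>2 x\<close> in BV.
  Convergence in BV norm is uniform, which yields continuity; for compactness, Helly's selection
  theorem applied to the Jordan decompositions gives a subsequence converging pointwise outside a
  countable set.\<close>

section \<open>Variation\<close>

lemma pvar_Nil [simp]: "pvar g [] = 0" and pvar_singleton [simp]: "pvar g [a] = 0"
  by (simp_all add: pvar_def)

lemma pvar_Cons_Cons: "pvar g (a # b # xs) = \<bar>g b - g a\<bar> + pvar g (b # xs)"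
  unfolding pvar_def by (simp del: sum.lessThan_Suc add: sum.lessThan_Suc_shift)

lemma pvar_append:
  "pvar g (xs @ ys) = pvar g xs + pvar g ys +
     (if xs \<noteq> [] \<and> ys \<noteq> [] then \<bar>g (hd ys) - g (last xs)\<bar> else 0)"
proof (induction xs rule: induct_list012)
  case 1 then show ?case by simp
next
  case (2 a) then show ?case
    by (cases ys) (auto simp: pvar_Cons_Cons)
next
  case (3 a b rest) then show ?case by (auto simp: pvar_Cons_Cons)
qed

lemma pvar_le_variation: "xs \<in> partitions a b \<Longrightarrow> ereal (pvar g xs) \<le> variation a b g"
  unfolding variation_def by (rule SUP_upper)

lemma variation_nonneg: "variation a b g \<ge> 0"
  using pvar_le_variation[of "[]" a b g] by (simp add: partitions_def zero_ereal_def)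

lemma abs_diff_le_variation:
  assumes "a \<le> s" "s \<le> t" "t \<le> b"
  shows "ereal \<bar>g t - g s\<bar> \<le> variation a b g"
  using pvar_le_variation[of "[s, t]" a b g] assms
  by (simp add: partitions_def pvar_Cons_Cons)

lemma variation_mono_right: "t \<le> t' \<Longrightarrow> variation a t g \<le> variation a t' g"
  unfolding variation_def by (rule SUP_subset_mono) (auto simp: partitions_def)

lemma variation_add_abs_diff_le:
  assumes "a \<le> s" "s \<le> t"
  shows "variation a s g + ereal \<bar>g t - g s\<bar> \<le> variation a t g"
proof (cases "variation a t g")
  case (real V)
  have "variation a s g \<le> ereal (V - \<bar>g t - g s\<bar>)"
    unfolding variation_def
  proof (rule SUP_least)
    fix xs assume xs: "xs \<in> partitions a s"
    then have "xs @ [s, t] \<in> partitions a t"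
      using assms by (auto simp: partitions_def sorted_append)
    from pvar_le_variation[OF this, of g] real
    have "pvar g (xs @ [s, t]) \<le> V" by simp
    moreover have "pvar g xs + \<bar>g t - g s\<bar> \<le> pvar g (xs @ [s, t])"
      by (simp add: pvar_append pvar_Cons_Cons)
    ultimately show "ereal (pvar g xs) \<le> ereal (V - \<bar>g t - g s\<bar>)" by simp
  qed
  then show ?thesis using real by (cases "variation a s g") auto
qed (use variation_nonneg[of a t g] in auto)

lemma variation_cong:
  assumes "\<And>x. x \<in> {a..b} \<Longrightarrow> g x = h x"
  shows "variation a b g = variation a b h"
proof -
  have "pvar g xs = pvar h xs" if xs: "xs \<in> partitions a b" for xs
  proof -
    have "g (xs ! i) = h (xs ! i)" if "i < length xs" for i
      using xs that nth_mem assms unfolding partitions_def by blast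
    then show ?thesis unfolding pvar_def by (intro sum.cong refl) auto
  qed
  then show ?thesis unfolding variation_def by (auto intro: SUP_cong)
qed

lemma bv_norm_cong: "(\<And>x. x \<in> {0..1} \<Longrightarrow> g x = h x) \<Longrightarrow> bv_norm g = bv_norm h"
  unfolding bv_norm_def using variation_cong[of 0 1 g h] by simp

lemma variation_diff_le: "variation a b (g - h) \<le> variation a b g + variation a b h"
  unfolding variation_def
proof (rule SUP_least)
  fix xs assume xs: "xs \<in> partitions a b"
  have "pvar (g - h) xs \<le> pvar g xs + pvar h xs"
    unfolding pvar_def sum.distrib[symmetric] by (intro sum_mono) (simp add: abs_triangle_ineq4)
  then have "ereal (pvar (g - h) xs) \<le> ereal (pvar g xs) + ereal (pvar h xs)" by simp
  also have "\<dots> \<le> (SUP xs\<in>partitions a b. ereal (pvar g xs)) + (SUP xs\<in>partitions a b. ereal (pvar h xs))"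
    by (intro add_mono SUP_upper xs)
  finally show "ereal (pvar (g - h) xs) \<le> \<dots>" .
qed

lemma BV_diff: "g \<in> BV \<Longrightarrow> h \<in> BV \<Longrightarrow> g - h \<in> BV"
  unfolding BV_def using variation_diff_le[of 0 1 g h]
  by (metis ereal_less_PInfty ereal_plus_eq_PInfty mem_Collect_eq order_le_less_trans)

lemma variation_le_bv_norm:
  assumes "g \<in> BV" "t \<le> 1"
  shows "variation 0 t g = ereal (real_of_ereal (variation 0 t g))"
    and "real_of_ereal (variation 0 t g) \<le> bv_norm g - \<bar>g 0\<bar>"
proof -
  have le: "variation 0 t g \<le> variation 0 1 g"
    using assms(2) by (rule variation_mono_right)
  with assms(1) variation_nonneg[of 0 t g] variation_nonneg[of 0 1 g]
  show "variation 0 t g = ereal (real_of_ereal (variation 0 t g))"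
    and "real_of_ereal (variation 0 t g) \<le> bv_norm g - \<bar>g 0\<bar>"
    unfolding BV_def bv_norm_def
    by (cases "variation 0 t g"; cases "variation 0 1 g"; simp)+
qed

lemma abs_le_bv_norm:
  assumes "g \<in> BV" "s \<in> {0..1}"
  shows "\<bar>g s\<bar> \<le> bv_norm g"
proof -
  have "ereal \<bar>g s - g 0\<bar> \<le> variation 0 s g"
    using assms(2) by (intro abs_diff_le_variation) auto
  with variation_le_bv_norm[of g s] assms have "\<bar>g s - g 0\<bar> \<le> bv_norm g - \<bar>g 0\<bar>"
    by (metis atLeastAtMost_iff ereal_less_eq(3) order.trans)
  then show ?thesis by linarith
qed

lemma bv_norm_nonneg: "bv_norm g \<ge> 0"
  unfolding bv_norm_def using variation_nonneg[of 0 1 g]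
  by (cases "variation 0 1 g") auto

text \<open>Jordan decomposition: with V t the variation of g on [0,t], both V and V - g are nondecreasing;
  arguments are clamped to [0,1] so that P and Q are monotone on the whole real line.\<close>

lemma BV_imp_diff_of_mono:
  assumes "g \<in> BV"
  obtains P Q where "mono P" "mono Q" "\<And>t. \<bar>P t\<bar> \<le> bv_norm g" "\<And>t. \<bar>Q t\<bar> \<le> 2 * bv_norm g"
    "\<And>t. t \<in> {0..1} \<Longrightarrow> g t = P t - Q t"
proof -
  define c where "c t = max 0 (min 1 t)" for t :: real
  define V where "V t = real_of_ereal (variation 0 (c t) g)" for t
  have c: "0 \<le> c t" "c t \<le> 1" "s \<le> t \<Longrightarrow> c s \<le> c t" "t \<in> {0..1} \<Longrightarrow> c t = t" for s t
    by (auto simp: c_def)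
  have V_bounds: "0 \<le> V t" "V t \<le> bv_norm g - \<bar>g 0\<bar>" for t
    unfolding V_def using variation_le_bv_norm(2)[OF assms c(2)] variation_nonneg[of 0 "c t" g]
    by (simp_all add: real_of_ereal_pos)
  have V_step: "V s + \<bar>g (c t) - g (c s)\<bar> \<le> V t" if "s \<le> t" for s t
    using variation_add_abs_diff_le[OF c(1) c(3)[OF that], of g]
      variation_le_bv_norm(1)[OF assms c(2)[of s]] variation_le_bv_norm(1)[OF assms c(2)[of t]]
    unfolding V_def by (metis ereal_less_eq(3) plus_ereal.simps(1))
  have g_bound: "\<bar>g (c t)\<bar> \<le> bv_norm g" for t
    using abs_le_bv_norm[OF assms] c(1,2) by simp
  show ?thesis
  proof
    show "mono V"
      by (rule monoI) (use V_step in force)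
    show "mono (\<lambda>t. V t - g (c t))"
      by (rule monoI) (use V_step in force)
    show "\<bar>V t\<bar> \<le> bv_norm g" for t
      using V_bounds[of t] by simp
    show "\<bar>V t - g (c t)\<bar> \<le> 2 * bv_norm g" for t
      using V_bounds[of t] g_bound[of t] by linarith
    show "g t = V t - (V t - g (c t))" if "t \<in> {0..1}" for t
      using c(4)[OF that] by simp
  qed
qed

lemma BV_borel_measurable:
  assumes "g \<in> BV"
  shows "set_borel_measurable lebesgue {0..1} g"
proof -
  obtain P Q where PQ: "mono P" "mono Q" "\<And>t. t \<in> {0..1} \<Longrightarrow> g t = P t - Q t"
    using BV_imp_diff_of_mono[OF assms] by metis
  have "(\<lambda>t. P t - Q t) \<in> borel_measurable lebesgue"
    using PQ(1,2) by (intro borel_measurable_diff measurable_completion)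
      (auto simp: measurable_lborel2 intro: borel_measurable_mono)
  then have "(\<lambda>t. indicator {0..1} t *\<^sub>R (P t - Q t)) \<in> borel_measurable lebesgue"
    by (intro borel_measurable_scaleR borel_measurable_indicator) auto
  also have "(\<lambda>t. indicator {0..1} t *\<^sub>R (P t - Q t)) = (\<lambda>t. indicator {0..1} t *\<^sub>R g t)"
    using PQ(3) by (auto simp: indicator_def)
  finally show ?thesis unfolding set_borel_measurable_def .
qed

section \<open>Helly's selection theorem for BV[0,1]\<close>

lemma mono_right_continuous_regularization:
  fixes P :: "real \<Rightarrow> real"
  assumes mono: "mono P" and bound: "\<And>x. \<bar>P x\<bar> \<le> M"
  shows "\<exists>P'. mono P' \<and> (\<forall>x. continuous (at_right x) P') \<and> (\<forall>x. \<bar>P' x\<bar> \<le> M)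
    \<and> (\<forall>x. isCont P x \<longrightarrow> P' x = P x)"
proof (intro exI conjI allI impI)
  define P' where "P' x = Inf (P ` {x<..})" for x
  have lower: "-M \<le> P x" for x
    using bound[of x] by linarith
  then have bdd: "bdd_below (P ` {x<..})" for x
    by (intro bdd_belowI2[of _ "-M"])
  have P'_le: "P' x \<le> P y" if "x < y" for x y
    unfolding P'_def using bdd that by (intro cInf_lower) auto
  show "mono P'"
    unfolding P'_def mono_def using bdd by (auto intro!: cInf_superset_mono)
  show "\<bar>P' x\<bar> \<le> M" for x
  proof -
    have "-M \<le> P' x"
      unfolding P'_def using lower by (intro cInf_greatest) auto
    moreover have "P' x \<le> M"
      using P'_le[of x "x + 1"] bound[of "x + 1"] by simp
    ultimately show ?thesis by simp
  qed
  show "continuous (at_right x) P'" for x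
  proof (rule iffD2[OF continuous_at_right_real_increasing], use \<open>mono P'\<close> in \<open>simp add: monoD\<close>, intro allI impI)
    fix \<epsilon> :: real assume "\<epsilon> > 0"
    then obtain z where z: "x < z" "P z < P' x + \<epsilon>"
      using cInf_lessD[of "P ` {x<..}" "P' x + \<epsilon>"] unfolding P'_def by auto
    have "P' (x + (z - x) / 2) \<le> P z"
      using z(1) by (intro P'_le) (simp add: field_simps)
    then have "P' (x + (z - x) / 2) - P' x < \<epsilon>"
      using z(2) by simp
    then show "\<exists>\<delta>>0. P' (x + \<delta>) - P' x < \<epsilon>"
      using z(1) by (intro exI[of _ "(z - x) / 2"]) auto
  qed
  show "P' x = P x" if "isCont P x" for x
  proof (rule tendsto_unique[OF trivial_limit_at_right_real])
    show "(P \<longlongrightarrow> P' x) (at_right x)"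
      using Lim_right_bound[of UNIV x P "-M"] mono lower unfolding P'_def
      by (auto simp: monoD)
    show "(P \<longlongrightarrow> P x) (at_right x)"
      using that by (simp add: isCont_def filterlim_at_split)
  qed
qed

text \<open>The library's Helly selection theorem asks for right-continuous functions; regularising
  from the right changes a monotone function only at its countably many jumps.\<close>

lemma Helly_selection_off_countable:
  fixes f :: "nat \<Rightarrow> real \<Rightarrow> real"
  assumes mono: "\<And>n. mono (f n)" and bound: "\<And>n x. \<bar>f n x\<bar> \<le> M"
  obtains s F N where "strict_mono s" "mono F" "\<And>x. \<bar>F x\<bar> \<le> M" "countable N"
    "\<And>x. x \<notin> N \<Longrightarrow> (\<lambda>n. f (s n) x) \<longlonglongrightarrow> F x"
proof -
  obtain g where "\<forall>n. mono (g n) \<and> (\<forall>x. continuous (at_right x) (g n)) \<and> (\<forall>x. \<bar>g n x\<bar> \<le> M)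
    \<and> (\<forall>x. isCont (f n) x \<longrightarrow> g n x = f n x)"
  proof -
    have "\<forall>n. \<exists>g. mono g \<and> (\<forall>x. continuous (at_right x) g) \<and> (\<forall>x. \<bar>g x\<bar> \<le> M)
      \<and> (\<forall>x. isCont (f n) x \<longrightarrow> g x = f n x)"
      using mono_right_continuous_regularization[OF mono bound] by blast
    then show ?thesis using that by (auto dest!: choice)
  qed
  then have g: "\<And>n. mono (g n)" "\<And>n x. continuous (at_right x) (g n)" "\<And>n x. \<bar>g n x\<bar> \<le> M"
    "\<And>n x. isCont (f n) x \<Longrightarrow> g n x = f n x"
    by blast+
  obtain s F where sF: "strict_mono s" "mono F" "\<And>x. \<bar>F x\<bar> \<le> M"
    "\<And>x. isCont F x \<Longrightarrow> (\<lambda>n. g (s n) x) \<longlonglongrightarrow> F x"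
    using Helly_selection[of g M, OF g(2,1,3)] by blast
  define N where "N = {x. \<not> isCont F x} \<union> (\<Union>n. {x. \<not> isCont (f n) x})"
  have "countable N"
    unfolding N_def using mono_ctble_discont[OF sF(2)] mono_ctble_discont[OF mono] by auto
  moreover have "(\<lambda>n. f (s n) x) \<longlonglongrightarrow> F x" if "x \<notin> N" for x
  proof -
    have "g (s n) x = f (s n) x" for n
      using g(4) that unfolding N_def by blast
    then show ?thesis
      using sF(4)[of x] that unfolding N_def by simp
  qed
  ultimately show ?thesis using that sF(1-3) by blast
qed

lemma BV_seq_imp_diff_of_mono:
  fixes xs :: "nat \<Rightarrow> real \<Rightarrow> real"
  assumes BV: "\<And>n. xs n \<in> BV" and bounded: "\<And>n. bv_norm (xs n) \<le> R"
  obtains P Q where "\<And>n. mono (P n)" "\<And>n. mono (Q n)" "\<And>n t. \<bar>P n t\<bar> \<le> R"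
    "\<And>n t. \<bar>Q n t\<bar> \<le> 2 * R" "\<And>n t. t \<in> {0..1} \<Longrightarrow> xs n t = P n t - Q n t"
proof -
  have "\<forall>n. \<exists>P Q. mono P \<and> mono Q \<and> (\<forall>t. \<bar>P t\<bar> \<le> R) \<and> (\<forall>t. \<bar>Q t\<bar> \<le> 2 * R)
      \<and> (\<forall>t\<in>{0..1}. xs n t = P t - Q t)"
  proof
    fix n
    obtain P Q where "mono P" "mono Q" "\<And>t. \<bar>P t\<bar> \<le> bv_norm (xs n)"
      "\<And>t. \<bar>Q t\<bar> \<le> 2 * bv_norm (xs n)" "\<And>t. t \<in> {0..1} \<Longrightarrow> xs n t = P t - Q t"
      using BV_imp_diff_of_mono[OF BV[of n]] by blast
    moreover have "\<bar>P t\<bar> \<le> R" "\<bar>Q t\<bar> \<le> 2 * R" for t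
      using calculation(3,4)[of t] bounded[of n] by auto
    ultimately show "\<exists>P Q. mono P \<and> mono Q \<and> (\<forall>t. \<bar>P t\<bar> \<le> R) \<and> (\<forall>t. \<bar>Q t\<bar> \<le> 2 * R)
      \<and> (\<forall>t\<in>{0..1}. xs n t = P t - Q t)"
      by blast
  qed
  from choice[OF this] obtain P where "\<forall>n. \<exists>Q. mono (P n) \<and> mono Q \<and> (\<forall>t. \<bar>P n t\<bar> \<le> R)
    \<and> (\<forall>t. \<bar>Q t\<bar> \<le> 2 * R) \<and> (\<forall>t\<in>{0..1}. xs n t = P n t - Q t)"
    by blast
  from choice[OF this] obtain Q where "\<forall>n. mono (P n) \<and> mono (Q n) \<and> (\<forall>t. \<bar>P n t\<bar> \<le> R)
    \<and> (\<forall>t. \<bar>Q n t\<bar> \<le> 2 * R) \<and> (\<forall>t\<in>{0..1}. xs n t = P n t - Q n t)"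
    by blast
  then show ?thesis
    using that by blast
qed

lemma BV_Helly_selection:
  fixes xs :: "nat \<Rightarrow> real \<Rightarrow> real"
  assumes BV: "\<And>n. xs n \<in> BV" and bounded: "\<And>n. bv_norm (xs n) \<le> R"
  obtains r X where "strict_mono r" "X \<in> borel_measurable lebesgue" "\<And>s. \<bar>X s\<bar> \<le> 3 * R"
    "AE s in lebesgue. s \<in> {0..1} \<longrightarrow> (\<lambda>n. xs (r n) s) \<longlonglongrightarrow> X s"
proof -
  obtain P Q where PQ: "\<And>n. mono (P n)" "\<And>n. mono (Q n)" "\<And>n t. \<bar>P n t\<bar> \<le> R"
    "\<And>n t. \<bar>Q n t\<bar> \<le> 2 * R" "\<And>n t. t \<in> {0..1} \<Longrightarrow> xs n t = P n t - Q n t"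
    using BV_seq_imp_diff_of_mono[of xs R, OF BV bounded] by blast
  obtain s1 G1 N1 where 1: "strict_mono s1" "mono G1" "\<And>x. \<bar>G1 x\<bar> \<le> R" "countable N1"
    "\<And>x. x \<notin> N1 \<Longrightarrow> (\<lambda>n. P (s1 n) x) \<longlonglongrightarrow> G1 x"
    using Helly_selection_off_countable[of P R, OF PQ(1,3)] by blast
  obtain s2 G2 N2 where 2: "strict_mono s2" "mono G2" "\<And>x. \<bar>G2 x\<bar> \<le> 2 * R" "countable N2"
    "\<And>x. x \<notin> N2 \<Longrightarrow> (\<lambda>n. Q (s1 (s2 n)) x) \<longlonglongrightarrow> G2 x"
    using Helly_selection_off_countable[of "\<lambda>n. Q (s1 n)" "2 * R", OF PQ(2,4)] by blast
  show ?thesis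
  proof
    show "strict_mono (s1 \<circ> s2)"
      using 1(1) 2(1) by (rule strict_mono_o)
    show "(\<lambda>s. G1 s - G2 s) \<in> borel_measurable lebesgue"
      using 1(2) 2(2) by (intro borel_measurable_diff measurable_completion)
        (auto simp: measurable_lborel2 intro: borel_measurable_mono)
    show "\<bar>G1 s - G2 s\<bar> \<le> 3 * R" for s
      using 1(3)[of s] 2(3)[of s] by linarith
    have "AE s in lebesgue. s \<notin> N1 \<union> N2"
      using 1(4) 2(4) by (intro AE_not_in null_sets_completionI countable_imp_null_set_lborel) auto
    then show "AE s in lebesgue. s \<in> {0..1} \<longrightarrow> (\<lambda>n. xs ((s1 \<circ> s2) n) s) \<longlonglongrightarrow> G1 s - G2 s"
    proof eventually_elim
      case (elim s)
      have "(\<lambda>n. P (s1 (s2 n)) s) \<longlonglongrightarrow> G1 s"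
        using LIMSEQ_subseq_LIMSEQ[OF 1(5) 2(1)] elim by (simp add: comp_def)
      with 2(5) elim have "(\<lambda>n. P (s1 (s2 n)) s - Q (s1 (s2 n)) s) \<longlonglongrightarrow> G1 s - G2 s"
        by (intro tendsto_diff) auto
      then show ?case using PQ(5) by simp
    qed
  qed
qed

section \<open>Measurability and integrability\<close>

lemma floor_mult_div_tendsto: "(\<lambda>n. of_int \<lfloor>real (Suc n) * x\<rfloor> / real (Suc n)) \<longlonglongrightarrow> x"
proof (rule tendsto_sandwich[of "\<lambda>n. x - 1 / real (Suc n)" _ _ "\<lambda>n. x"])
  show "\<forall>\<^sub>F n in sequentially. x - 1 / real (Suc n) \<le> of_int \<lfloor>real (Suc n) * x\<rfloor> / real (Suc n)"
  proof (intro always_eventually allI)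
    fix n
    have "(real (Suc n) * x - 1) / real (Suc n) \<le> of_int \<lfloor>real (Suc n) * x\<rfloor> / real (Suc n)"
      by (intro divide_right_mono) linarith+
    then show "x - 1 / real (Suc n) \<le> of_int \<lfloor>real (Suc n) * x\<rfloor> / real (Suc n)"
      by (simp add: diff_divide_distrib del: of_nat_Suc)
  qed
  show "\<forall>\<^sub>F n in sequentially. of_int \<lfloor>real (Suc n) * x\<rfloor> / real (Suc n) \<le> x"
    by (intro always_eventually allI) (simp add: divide_le_eq mult.commute)
  show "(\<lambda>n. x - 1 / real (Suc n)) \<longlonglongrightarrow> x"
    using tendsto_diff[OF tendsto_const lim_1_over_n[THEN LIMSEQ_Suc], of x] by simp
qed simp

text \<open>Superposition with a Caratheodory function: approximate X by the step functions
  \<open>\<lfloor>(n+1) X\<rfloor> / (n+1)\<close>, which take countably many values.\<close>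

lemma borel_measurable_caratheodory:
  fixes f :: "'a::euclidean_space \<Rightarrow> real \<Rightarrow> real"
  assumes f_meas: "\<And>u. (\<lambda>x. f x u) \<in> borel_measurable lebesgue"
    and f_cont: "AE x in lebesgue. isCont (f x) (X x)"
    and X_meas: "X \<in> borel_measurable lebesgue"
  shows "(\<lambda>x. f x (X x)) \<in> borel_measurable lebesgue"
proof -
  define g where "g n x = f x (of_int \<lfloor>real (Suc n) * X x\<rfloor> / real (Suc n))" for n x
  have "g n \<in> borel_measurable lebesgue" for n
  proof -
    have "(\<lambda>x. \<lfloor>real (Suc n) * X x\<rfloor>) \<in> measurable lebesgue (count_space UNIV)"
      using X_meas by measurable
    then show ?thesis
      unfolding g_def using f_meas by (rule measurable_compose_countable[rotated])
  qed
  then have "(\<lambda>x. lim (\<lambda>n. g n x)) \<in> borel_measurable lebesgue"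
    by (rule borel_measurable_lim_metric)
  moreover have "AE x in lebesgue. lim (\<lambda>n. g n x) = f x (X x)"
    using f_cont
  proof eventually_elim
    case (elim x)
    show ?case
      unfolding g_def by (intro limI isCont_tendsto_compose[OF elim floor_mult_div_tendsto])
  qed
  ultimately show ?thesis
    by (rule borel_measurable_AE)
qed

lemma set_borel_measurable_restrict_space_iff:
  fixes f :: "'a \<Rightarrow> 'b::real_normed_vector"
  assumes "A \<in> sets M"
  shows "set_borel_measurable M A f \<longleftrightarrow> f \<in> borel_measurable (restrict_space M A)"
  using assms by (simp add: set_borel_measurable_def borel_measurable_restrict_space_iff)

lemma set_integral_sum:
  fixes f :: "'i \<Rightarrow> 'a \<Rightarrow> real"
  assumes "\<And>i. i \<in> I \<Longrightarrow> set_integrable M A (f i)"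
  shows set_integrable_sum: "set_integrable M A (\<lambda>x. \<Sum>i\<in>I. f i x)"
    and "(LINT x:A|M. \<Sum>i\<in>I. f i x) = (\<Sum>i\<in>I. LINT x:A|M. f i x)"
proof -
  have int: "integrable M (\<lambda>x. indicator A x *\<^sub>R f i x)" if "i \<in> I" for i
    using assms[OF that] unfolding set_integrable_def .
  show "set_integrable M A (\<lambda>x. \<Sum>i\<in>I. f i x)"
    unfolding set_integrable_def scaleR_sum_right by (rule Bochner_Integration.integrable_sum[OF int])
  show "(LINT x:A|M. \<Sum>i\<in>I. f i x) = (\<Sum>i\<in>I. LINT x:A|M. f i x)"
    unfolding set_lebesgue_integral_def scaleR_sum_right by (rule Bochner_Integration.integral_sum[OF int])
qed

lemma set_integral_dominated_tendsto_zero: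
  fixes u :: "nat \<Rightarrow> 'a \<Rightarrow> real"
  assumes u: "\<And>n. set_borel_measurable M A (u n)" and w: "set_integrable M A w"
    and lim: "AE x in M. x \<in> A \<longrightarrow> (\<lambda>n. u n x) \<longlonglongrightarrow> 0"
    and bound: "\<And>n. AE x in M. x \<in> A \<longrightarrow> \<bar>u n x\<bar> \<le> w x"
  shows "(\<lambda>n. LINT x:A|M. u n x) \<longlonglongrightarrow> 0"
proof -
  have "(\<lambda>n. integral\<^sup>L M (\<lambda>x. indicator A x *\<^sub>R u n x)) \<longlonglongrightarrow> integral\<^sup>L M (\<lambda>x. 0)"
  proof (rule integral_dominated_convergence[where w = "\<lambda>x. indicator A x *\<^sub>R w x"])
    show "(\<lambda>x. indicator A x *\<^sub>R u n x) \<in> borel_measurable M" for n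
      using u[of n] unfolding set_borel_measurable_def .
    show "integrable M (\<lambda>x. indicator A x *\<^sub>R w x)"
      using w unfolding set_integrable_def .
    show "AE x in M. (\<lambda>n. indicator A x *\<^sub>R u n x) \<longlonglongrightarrow> 0"
      using lim by eventually_elim (auto simp: indicator_def)
    show "AE x in M. norm (indicator A x *\<^sub>R u n x) \<le> indicator A x *\<^sub>R w x" for n
      using bound[of n] by eventually_elim (auto simp: indicator_def)
  qed simp
  then show ?thesis
    unfolding set_lebesgue_integral_def by simp
qed

lemma set_integrable_mult_Lp_conjugate:
  assumes p_gt: "p > 1" and conj: "if p = \<infinity> then q = 1 else 1 / real_of_ereal p + 1 / q = 1"
    and \<phi>: "in_Lp p \<phi>" and g: "in_Lp (ereal q) g"
  shows "set_integrable lebesgue {0..1} (\<lambda>s. g s * \<phi> s)"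
proof -
  have g_int: "set_integrable lebesgue {0..1} (\<lambda>s. \<bar>g s\<bar> powr q)"
    using g unfolding in_Lp_def by simp
  have "g \<in> borel_measurable (lebesgue_on {0..1})" "\<phi> \<in> borel_measurable (lebesgue_on {0..1})"
    using g \<phi> unfolding in_Lp_def by (simp_all add: set_borel_measurable_restrict_space_iff)
  then have meas: "set_borel_measurable lebesgue {0..1} (\<lambda>s. g s * \<phi> s)"
    by (simp add: set_borel_measurable_restrict_space_iff borel_measurable_times)
  show ?thesis
  proof (cases "p = \<infinity>")
    case True
    then have "q = 1" using conj by simp
    obtain C where C: "AE s in lebesgue. s \<in> {0..1} \<longrightarrow> \<bar>\<phi> s\<bar> \<le> C"
      using \<phi> True unfolding in_Lp_def by auto
    have "set_integrable lebesgue {0..1} (\<lambda>s. C * \<bar>g s\<bar>)"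
      using g_int \<open>q = 1\<close> by simp
    then show ?thesis
    proof (rule set_integrable_bound[OF _ meas])
      show "AE s in lebesgue. s \<in> {0..1} \<longrightarrow> norm (g s * \<phi> s) \<le> norm (C * \<bar>g s\<bar>)"
        using C
      proof eventually_elim
        case (elim s)
        have "\<bar>g s\<bar> * \<bar>\<phi> s\<bar> \<le> \<bar>g s\<bar> * \<bar>C\<bar>" if "s \<in> {0..1}"
          using elim that by (intro mult_left_mono) auto
        then show ?case by (simp add: abs_mult mult.commute)
      qed
    qed
  next
    case False
    define r where "r = real_of_ereal p"
    have "p = ereal r" using False p_gt unfolding r_def by (cases p) auto
    with p_gt have "r > 1" by simp
    have conj': "1 / q + 1 / r = 1" using conj False unfolding r_def by simp
    moreover have "0 < 1 / r" "1 / r < 1"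
      using \<open>r > 1\<close> by auto
    ultimately have "0 < 1 / q" "1 / q < 1"
      by linarith+
    then have "q > 1"
      by (simp add: divide_less_eq_1_pos)
    have "set_integrable lebesgue {0..1} (\<lambda>s. \<bar>\<phi> s\<bar> powr r)"
      using \<phi> \<open>p = ereal r\<close> unfolding in_Lp_def by simp
    with g_int have "set_integrable lebesgue {0..1} (\<lambda>s. \<bar>g s\<bar> powr q / q + \<bar>\<phi> s\<bar> powr r / r)"
      by (intro set_integral_add(1) set_integrable_divide)
    then show ?thesis
    proof (rule set_integrable_bound[OF _ meas])
      show "AE s in lebesgue. s \<in> {0..1} \<longrightarrow>
          norm (g s * \<phi> s) \<le> norm (\<bar>g s\<bar> powr q / q + \<bar>\<phi> s\<bar> powr r / r)"
      proof (intro AE_I2 impI)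
        fix s
        have "\<bar>g s\<bar> * \<bar>\<phi> s\<bar> \<le> \<bar>g s\<bar> powr q / q + \<bar>\<phi> s\<bar> powr r / r"
          by (rule Youngs_inequality[OF \<open>q > 1\<close> \<open>r > 1\<close> conj']) auto
        moreover have "0 \<le> \<bar>g s\<bar> powr q / q + \<bar>\<phi> s\<bar> powr r / r"
          using \<open>q > 1\<close> \<open>r > 1\<close> by simp
        ultimately show "norm (g s * \<phi> s) \<le> norm (\<bar>g s\<bar> powr q / q + \<bar>\<phi> s\<bar> powr r / r)"
          by (simp add: abs_mult)
      qed
    qed
  qed
qed

section \<open>The linear integral operator\<close>

definition kernel_operator :: "(real \<Rightarrow> real \<Rightarrow> real) \<Rightarrow> (real \<Rightarrow> real) \<Rightarrow> real \<Rightarrow> real" where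
  "kernel_operator k d t = (LINT s:{0..1}|lebesgue. k t s * d s)"

locale BV_kernel =
  fixes k :: "real \<Rightarrow> real \<Rightarrow> real" and m \<phi> :: "real \<Rightarrow> real"
  assumes k_meas: "\<And>t. t \<in> {0..1} \<Longrightarrow> set_borel_measurable lebesgue {0..1} (k t)"
    and k_phi_int: "\<And>t. t \<in> {0..1} \<Longrightarrow> set_integrable lebesgue {0..1} (\<lambda>s. k t s * \<phi> s)"
    and m_meas: "set_borel_measurable lebesgue {0..1} m"
    and m_phi_int: "set_integrable lebesgue {0..1} (\<lambda>s. m s * \<phi> s)"
    and phi_nonneg: "\<And>s. s \<in> {0..1} \<Longrightarrow> \<phi> s \<ge> 0"
    and m_nonneg: "\<And>s. s \<in> {0..1} \<Longrightarrow> m s \<ge> 0"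
    and k_var: "AE s in lebesgue. s \<in> {0..1} \<longrightarrow> variation 0 1 (\<lambda>t. k t s) \<le> ereal (m s)"
    and k_cont: "\<And>\<tau>. \<tau> \<in> {0..1} \<Longrightarrow>
        ((\<lambda>t. LINT s:{0..1}|lebesgue. \<bar>k t s - k \<tau> s\<bar> * \<phi> s) \<longlongrightarrow> 0) (at \<tau> within {0..1})"
begin

text \<open>The operator is applied to \<open>d(s) = f(s, x(s))\<close>, where \<open>C = \<psi>(sup |x|)\<close>.\<close>

definition dominated :: "real \<Rightarrow> (real \<Rightarrow> real) \<Rightarrow> bool" where
  "dominated C d \<longleftrightarrow> set_borel_measurable lebesgue {0..1} d \<and> (\<forall>s\<in>{0..1}. \<bar>d s\<bar> \<le> C * \<phi> s)"

lemma dominated_abs: "dominated C d \<Longrightarrow> dominated C (\<lambda>s. \<bar>d s\<bar>)"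
  unfolding dominated_def by (simp add: set_borel_measurable_restrict_space_iff borel_measurable_abs)

lemma dominated_diff:
  assumes "dominated C d" "dominated C' d'"
  shows "dominated (C + C') (\<lambda>s. d s - d' s)"
  using assms unfolding dominated_def
  by (auto simp: set_borel_measurable_restrict_space_iff borel_measurable_diff distrib_right
      intro: order_trans[OF abs_triangle_ineq4] add_mono)

lemma set_integrable_mult_dominated:
  assumes g: "set_borel_measurable lebesgue {0..1} g" "set_integrable lebesgue {0..1} (\<lambda>s. g s * \<phi> s)"
    and d: "dominated C d"
  shows "set_integrable lebesgue {0..1} (\<lambda>s. g s * d s)"
proof (rule set_integrable_bound)
  show "set_integrable lebesgue {0..1} (\<lambda>s. C * \<bar>g s * \<phi> s\<bar>)"
    using set_integrable_abs[OF g(2)] by simp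
  show "set_borel_measurable lebesgue {0..1} (\<lambda>s. g s * d s)"
    using g(1) d unfolding dominated_def
    by (simp add: set_borel_measurable_restrict_space_iff borel_measurable_times)
  show "AE s in lebesgue. s \<in> {0..1} \<longrightarrow> norm (g s * d s) \<le> norm (C * \<bar>g s * \<phi> s\<bar>)"
  proof (intro AE_I2 impI)
    fix s :: real assume s: "s \<in> {0..1}"
    then have "\<bar>g s\<bar> * \<bar>d s\<bar> \<le> \<bar>g s\<bar> * (C * \<phi> s)"
      using d unfolding dominated_def by (intro mult_left_mono) auto
    moreover have "\<bar>g s\<bar> * (C * \<phi> s) \<le> \<bar>g s\<bar> * (\<bar>C\<bar> * \<phi> s)"
      using phi_nonneg[OF s] by (intro mult_left_mono mult_right_mono) auto
    ultimately show "norm (g s * d s) \<le> norm (C * \<bar>g s * \<phi> s\<bar>)"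
      using phi_nonneg[OF s] by (simp add: abs_mult mult_ac)
  qed
qed

lemma kernel_integrable: "t \<in> {0..1} \<Longrightarrow> dominated C d \<Longrightarrow> set_integrable lebesgue {0..1} (\<lambda>s. k t s * d s)"
  by (rule set_integrable_mult_dominated[OF k_meas k_phi_int])

lemma m_integrable: "dominated C d \<Longrightarrow> set_integrable lebesgue {0..1} (\<lambda>s. m s * \<bar>d s\<bar>)"
  by (rule set_integrable_mult_dominated[OF m_meas m_phi_int dominated_abs])

lemma kernel_diff_integrable:
  assumes "t \<in> {0..1}" "\<tau> \<in> {0..1}" "dominated C d"
  shows "set_integrable lebesgue {0..1} (\<lambda>s. \<bar>k t s - k \<tau> s\<bar> * \<bar>d s\<bar>)"
proof -
  have "set_integrable lebesgue {0..1} (\<lambda>s. \<bar>k t s * \<bar>d s\<bar> - k \<tau> s * \<bar>d s\<bar>\<bar>)"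
    using assms by (intro set_integrable_abs set_integral_diff(1) kernel_integrable dominated_abs)
  then show ?thesis
    by (simp add: abs_mult left_diff_distrib[symmetric])
qed

lemma abs_kernel_operator_diff_le:
  assumes "t \<in> {0..1}" "\<tau> \<in> {0..1}" "dominated C d"
  shows "\<bar>kernel_operator k d t - kernel_operator k d \<tau>\<bar>
    \<le> (LINT s:{0..1}|lebesgue. \<bar>k t s - k \<tau> s\<bar> * \<bar>d s\<bar>)"
proof -
  have "kernel_operator k d t - kernel_operator k d \<tau>
      = (LINT s:{0..1}|lebesgue. (k t s - k \<tau> s) * d s)"
    using assms unfolding kernel_operator_def
    by (simp add: set_integral_diff(2) kernel_integrable left_diff_distrib)
  also have "\<bar>\<dots>\<bar> \<le> (LINT s:{0..1}|lebesgue. \<bar>(k t s - k \<tau> s) * d s\<bar>)"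
    using assms by (intro set_integral_norm_bound[where 'a=real, simplified]) 
      (simp add: set_integral_diff(1) kernel_integrable left_diff_distrib)
  finally show ?thesis
    by (simp add: abs_mult)
qed

lemma kernel_diff_phi_integrable:
  assumes t: "t \<in> {0..1}" and \<tau>: "\<tau> \<in> {0..1}"
  shows "set_integrable lebesgue {0..1} (\<lambda>s. \<bar>k t s - k \<tau> s\<bar> * \<phi> s)"
proof -
  have "set_integrable lebesgue {0..1} (\<lambda>s. \<bar>k t s * \<phi> s - k \<tau> s * \<phi> s\<bar>)"
    using t \<tau> by (intro set_integrable_abs set_integral_diff(1) k_phi_int)
  moreover have "set_integrable lebesgue {0..1} (\<lambda>s. \<bar>k t s * \<phi> s - k \<tau> s * \<phi> s\<bar>)
      = set_integrable lebesgue {0..1} (\<lambda>s. \<bar>k t s - k \<tau> s\<bar> * \<phi> s)"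
    using phi_nonneg by (intro set_integrable_cong) (simp_all add: abs_mult left_diff_distrib[symmetric])
  ultimately show ?thesis
    by simp
qed

lemma abs_kernel_operator_diff_le_phi:
  assumes t: "t \<in> {0..1}" and \<tau>: "\<tau> \<in> {0..1}" and d: "dominated C d"
  shows "\<bar>kernel_operator k d t - kernel_operator k d \<tau>\<bar>
    \<le> C * (LINT s:{0..1}|lebesgue. \<bar>k t s - k \<tau> s\<bar> * \<phi> s)"
proof -
  have "\<bar>k t s - k \<tau> s\<bar> * \<bar>d s\<bar> \<le> C * (\<bar>k t s - k \<tau> s\<bar> * \<phi> s)" if "s \<in> {0..1}" for s
  proof -
    have "\<bar>d s\<bar> \<le> C * \<phi> s"
      using d that unfolding dominated_def by blast
    then have "\<bar>k t s - k \<tau> s\<bar> * \<bar>d s\<bar> \<le> \<bar>k t s - k \<tau> s\<bar> * (C * \<phi> s)"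
      by (rule mult_left_mono) simp
    then show ?thesis by (simp add: mult_ac)
  qed
  then have "(LINT s:{0..1}|lebesgue. \<bar>k t s - k \<tau> s\<bar> * \<bar>d s\<bar>)
      \<le> (LINT s:{0..1}|lebesgue. C * (\<bar>k t s - k \<tau> s\<bar> * \<phi> s))"
    by (intro set_integral_mono kernel_diff_integrable[OF t \<tau> d] set_integrable_mult_right
        kernel_diff_phi_integrable[OF t \<tau>])
  with abs_kernel_operator_diff_le[OF t \<tau> d] show ?thesis
    by simp
qed

lemma continuous_on_kernel_operator:
  assumes d: "dominated C d"
  shows "continuous_on {0..1} (kernel_operator k d)"
  unfolding continuous_on_eq_continuous_within continuous_within
proof (intro ballI, rule Lim_transform[OF tendsto_const])
  fix \<tau> :: real assume \<tau>: "\<tau> \<in> {0..1}"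
  show "((\<lambda>t. kernel_operator k d t - kernel_operator k d \<tau>) \<longlongrightarrow> 0) (at \<tau> within {0..1})"
  proof (rule Lim_null_comparison)
    show "\<forall>\<^sub>F t in at \<tau> within {0..1}. norm (kernel_operator k d t - kernel_operator k d \<tau>)
        \<le> C * (LINT s:{0..1}|lebesgue. \<bar>k t s - k \<tau> s\<bar> * \<phi> s)"
      using abs_kernel_operator_diff_le_phi[OF _ \<tau> d] by (auto simp: eventually_at_filter)
    show "((\<lambda>t. C * (LINT s:{0..1}|lebesgue. \<bar>k t s - k \<tau> s\<bar> * \<phi> s)) \<longlongrightarrow> 0) (at \<tau> within {0..1})"
      using tendsto_mult_right_zero[OF k_cont[OF \<tau>]] .
  qed
qed

lemma pvar_kernel_operator_le:
  assumes xs: "xs \<in> partitions 0 1" and d: "dominated C d"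
  shows "pvar (kernel_operator k d) xs \<le> (LINT s:{0..1}|lebesgue. m s * \<bar>d s\<bar>)"
proof -
  let ?I = "{..<length xs - 1}"
  let ?a = "\<lambda>i s. \<bar>k (xs ! Suc i) s - k (xs ! i) s\<bar> * \<bar>d s\<bar>"
  have node: "xs ! j \<in> {0..1}" if "j < length xs" for j
    using xs that nth_mem unfolding partitions_def by blast
  then have nodes: "xs ! Suc i \<in> {0..1}" "xs ! i \<in> {0..1}" if "i \<in> ?I" for i
    using that by auto
  then have a_int: "set_integrable lebesgue {0..1} (?a i)" if "i \<in> ?I" for i
    using kernel_diff_integrable[OF _ _ d] that by blast
  have sum_eq: "(\<lambda>s. \<Sum>i\<in>?I. ?a i s) = (\<lambda>s. pvar (\<lambda>t. k t s) xs * \<bar>d s\<bar>)"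
    by (simp add: pvar_def sum_distrib_right)
  have "pvar (kernel_operator k d) xs \<le> (\<Sum>i\<in>?I. LINT s:{0..1}|lebesgue. ?a i s)"
    unfolding pvar_def using nodes by (intro sum_mono abs_kernel_operator_diff_le[OF _ _ d]) auto
  also have "\<dots> = (LINT s:{0..1}|lebesgue. pvar (\<lambda>t. k t s) xs * \<bar>d s\<bar>)"
    using set_integral_sum(2)[where I = ?I and f = ?a, OF a_int] unfolding sum_eq by simp
  also have "\<dots> \<le> (LINT s:{0..1}|lebesgue. m s * \<bar>d s\<bar>)"
  proof (rule set_integral_mono_AE)
    show "set_integrable lebesgue {0..1} (\<lambda>s. pvar (\<lambda>t. k t s) xs * \<bar>d s\<bar>)"
      using set_integrable_sum[where I = ?I and f = ?a, OF a_int] unfolding sum_eq .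
    show "set_integrable lebesgue {0..1} (\<lambda>s. m s * \<bar>d s\<bar>)"
      by (rule m_integrable[OF d])
    show "AE s\<in>{0..1} in lebesgue. pvar (\<lambda>t. k t s) xs * \<bar>d s\<bar> \<le> m s * \<bar>d s\<bar>"
      using k_var
    proof eventually_elim
      case (elim s)
      show ?case
      proof
        assume "s \<in> {0..1}"
        with elim pvar_le_variation[OF xs, of "\<lambda>t. k t s"] have "pvar (\<lambda>t. k t s) xs \<le> m s"
          by (metis ereal_less_eq(3) order_trans)
        then show "pvar (\<lambda>t. k t s) xs * \<bar>d s\<bar> \<le> m s * \<bar>d s\<bar>"
          by (rule mult_right_mono) simp
      qed
    qed
  qed
  finally show ?thesis .
qed

lemma variation_kernel_operator_le:
  "dominated C d \<Longrightarrow> variation 0 1 (kernel_operator k d) \<le> ereal (LINT s:{0..1}|lebesgue. m s * \<bar>d s\<bar>)"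
  unfolding variation_def by (rule SUP_least) (simp add: pvar_kernel_operator_le)

lemma kernel_operator_CBV: "dominated C d \<Longrightarrow> kernel_operator k d \<in> CBV"
  unfolding CBV_def BV_def
  using variation_kernel_operator_le continuous_on_kernel_operator le_less_trans by fastforce

lemma bv_norm_kernel_operator_le:
  assumes d: "dominated C d"
  shows "bv_norm (kernel_operator k d) \<le> (LINT s:{0..1}|lebesgue. (\<bar>k 0 s\<bar> + m s) * \<bar>d s\<bar>)"
proof -
  have k0_int: "set_integrable lebesgue {0..1} (\<lambda>s. \<bar>k 0 s\<bar> * \<bar>d s\<bar>)"
    using set_integrable_abs[OF kernel_integrable[OF _ d, of 0]] by (simp add: abs_mult)
  have "\<bar>kernel_operator k d 0\<bar> \<le> (LINT s:{0..1}|lebesgue. \<bar>k 0 s\<bar> * \<bar>d s\<bar>)"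
    unfolding kernel_operator_def using kernel_integrable[OF _ d, of 0]
    by (auto simp: abs_mult dest: set_integral_norm_bound[where 'a=real])
  moreover have "real_of_ereal (variation 0 1 (kernel_operator k d)) \<le> (LINT s:{0..1}|lebesgue. m s * \<bar>d s\<bar>)"
    using variation_kernel_operator_le[OF d] variation_nonneg[of 0 1 "kernel_operator k d"]
    by (cases "variation 0 1 (kernel_operator k d)") auto
  ultimately have "bv_norm (kernel_operator k d)
      \<le> (LINT s:{0..1}|lebesgue. \<bar>k 0 s\<bar> * \<bar>d s\<bar>) + (LINT s:{0..1}|lebesgue. m s * \<bar>d s\<bar>)"
    unfolding bv_norm_def by linarith
  also have "\<dots> = (LINT s:{0..1}|lebesgue. (\<bar>k 0 s\<bar> + m s) * \<bar>d s\<bar>)"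
    using k0_int m_integrable[OF d] by (simp add: set_integral_add(2) distrib_right)
  finally show ?thesis .
qed

lemma kernel_operator_diff:
  assumes "dominated C d" "dominated C' d'" "t \<in> {0..1}"
  shows "kernel_operator k d t - kernel_operator k d' t = kernel_operator k (\<lambda>s. d s - d' s) t"
  using assms unfolding kernel_operator_def
  by (simp add: kernel_integrable right_diff_distrib)

lemma bv_norm_kernel_operator_tendsto_zero:
  assumes D: "\<And>n. dominated C (D n)"
    and lim: "AE s in lebesgue. s \<in> {0..1} \<longrightarrow> (\<lambda>n. D n s) \<longlonglongrightarrow> 0"
  shows "(\<lambda>n. bv_norm (kernel_operator k (D n))) \<longlonglongrightarrow> 0"
proof (rule tendsto_sandwich[OF _ _ tendsto_const])
  let ?w = "\<lambda>s. \<bar>k 0 s\<bar> + m s"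
  show "\<forall>\<^sub>F n in sequentially. 0 \<le> bv_norm (kernel_operator k (D n))"
    by (simp add: bv_norm_nonneg)
  show "\<forall>\<^sub>F n in sequentially. bv_norm (kernel_operator k (D n)) \<le> (LINT s:{0..1}|lebesgue. ?w s * \<bar>D n s\<bar>)"
    using bv_norm_kernel_operator_le[OF D] by simp
  show "(\<lambda>n. LINT s:{0..1}|lebesgue. ?w s * \<bar>D n s\<bar>) \<longlonglongrightarrow> 0"
  proof (rule set_integral_dominated_tendsto_zero[where w = "\<lambda>s. C * (?w s * \<phi> s)"])
    show "set_borel_measurable lebesgue {0..1} (\<lambda>s. ?w s * \<bar>D n s\<bar>)" for n
    proof -
      have "set_integrable lebesgue {0..1} (\<lambda>s. ?w s * \<bar>D n s\<bar>)"
        using set_integral_add(1)[OF set_integrable_abs[OF kernel_integrable[OF _ D, of 0]] m_integrable[OF D]]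
        by (simp add: abs_mult distrib_right)
      then show ?thesis
        unfolding set_integrable_def set_borel_measurable_def by (rule borel_measurable_integrable)
    qed
    have "set_integrable lebesgue {0..1} (\<lambda>s. \<bar>k 0 s * \<phi> s\<bar> + m s * \<phi> s)"
      using set_integrable_abs[OF k_phi_int[of 0]] m_phi_int by (intro set_integral_add(1)) auto
    moreover have "set_integrable lebesgue {0..1} (\<lambda>s. \<bar>k 0 s * \<phi> s\<bar> + m s * \<phi> s)
        = set_integrable lebesgue {0..1} (\<lambda>s. ?w s * \<phi> s)"
      using phi_nonneg by (intro set_integrable_cong) (simp_all add: abs_mult distrib_right)
    ultimately show "set_integrable lebesgue {0..1} (\<lambda>s. C * (?w s * \<phi> s))"
      by simp
    show "AE s in lebesgue. s \<in> {0..1} \<longrightarrow> (\<lambda>n. ?w s * \<bar>D n s\<bar>) \<longlonglongrightarrow> 0"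
      using lim
    proof eventually_elim
      case (elim s)
      show ?case
        using elim by (intro impI tendsto_mult_right_zero tendsto_rabs_zero) blast
    qed
    show "AE s in lebesgue. s \<in> {0..1} \<longrightarrow> \<bar>?w s * \<bar>D n s\<bar>\<bar> \<le> C * (?w s * \<phi> s)" for n
    proof (intro AE_I2 impI)
      fix s :: real assume s: "s \<in> {0..1}"
      then have "?w s * \<bar>D n s\<bar> \<le> ?w s * (C * \<phi> s)"
        using D[of n] m_nonneg[OF s] unfolding dominated_def by (intro mult_left_mono) auto
      then show "\<bar>?w s * \<bar>D n s\<bar>\<bar> \<le> C * (?w s * \<phi> s)"
        using m_nonneg[OF s] by (simp add: mult_ac)
    qed
  qed
qed

end

section \<open>The Hammerstein operator\<close>

locale Hammerstein = BV_kernel k m \<phi> for k :: "real \<Rightarrow> real \<Rightarrow> real" and m \<phi> +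
  fixes f :: "real \<Rightarrow> real \<Rightarrow> real" and \<psi> :: "real \<Rightarrow> real"
  assumes f_meas: "\<And>u. set_borel_measurable lebesgue {0..1} (\<lambda>t. f t u)"
    and f_cont: "AE t in lebesgue. t \<in> {0..1} \<longrightarrow> continuous_on UNIV (f t)"
    and psi_mono: "mono_on {0..} \<psi>"
    and f_bound: "\<And>t u. t \<in> {0..1} \<Longrightarrow> \<bar>f t u\<bar> \<le> \<phi> t * \<psi> \<bar>u\<bar>"
begin

lemma F2_eq_kernel_operator: "F2 k f x = kernel_operator k (\<lambda>s. f s (x s))"
  by (simp add: fun_eq_iff F2_def kernel_operator_def)

lemma dominated_superposition:
  assumes X: "set_borel_measurable lebesgue {0..1} X" and B: "\<And>s. s \<in> {0..1} \<Longrightarrow> \<bar>X s\<bar> \<le> B"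
  shows "dominated (\<psi> B) (\<lambda>s. f s (X s))"
  unfolding dominated_def
proof (intro conjI ballI)
  let ?f = "\<lambda>s u. indicator {0..1} s * f s u" and ?X = "\<lambda>s. indicator {0..1} s * X s"
  have "(\<lambda>s. ?f s (?X s)) \<in> borel_measurable lebesgue"
  proof (rule borel_measurable_caratheodory[where f = ?f and X = ?X])
    show "(\<lambda>s. ?f s u) \<in> borel_measurable lebesgue" for u
      using f_meas[of u] unfolding set_borel_measurable_def by simp
    show "?X \<in> borel_measurable lebesgue"
      using X unfolding set_borel_measurable_def by simp
    show "AE s in lebesgue. isCont (?f s) (?X s)"
      using f_cont
    proof eventually_elim
      case (elim s)
      then show ?case
        by (cases "s \<in> {0..1}") (simp_all add: continuous_on_eq_continuous_at)
    qed
  qed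
  moreover have "?f s (?X s) = indicator {0..1} s * f s (X s)" for s
    by (simp add: indicator_def)
  ultimately show "set_borel_measurable lebesgue {0..1} (\<lambda>s. f s (X s))"
    unfolding set_borel_measurable_def by simp
next
  fix s :: real assume s: "s \<in> {0..1}"
  have "\<psi> \<bar>X s\<bar> \<le> \<psi> B"
    using B[OF s] by (intro mono_onD[OF psi_mono]) auto
  then have "\<phi> s * \<psi> \<bar>X s\<bar> \<le> \<phi> s * \<psi> B"
    using phi_nonneg[OF s] by (rule mult_left_mono)
  with f_bound[OF s, of "X s"] show "\<bar>f s (X s)\<bar> \<le> \<psi> B * \<phi> s"
    by (simp add: mult.commute)
qed

lemma F2_CBV:
  assumes "set_borel_measurable lebesgue {0..1} X" "\<And>s. s \<in> {0..1} \<Longrightarrow> \<bar>X s\<bar> \<le> B"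
  shows "F2 k f X \<in> CBV"
  unfolding F2_eq_kernel_operator by (rule kernel_operator_CBV[OF dominated_superposition[OF assms]])

lemma bv_norm_F2_diff_tendsto_zero:
  assumes Y: "\<And>n. set_borel_measurable lebesgue {0..1} (Y n)" "\<And>n s. s \<in> {0..1} \<Longrightarrow> \<bar>Y n s\<bar> \<le> B"
    and X: "set_borel_measurable lebesgue {0..1} X" "\<And>s. s \<in> {0..1} \<Longrightarrow> \<bar>X s\<bar> \<le> B"
    and lim: "AE s in lebesgue. s \<in> {0..1} \<longrightarrow> (\<lambda>n. Y n s) \<longlonglongrightarrow> X s"
  shows "(\<lambda>n. bv_norm (F2 k f (Y n) - F2 k f X)) \<longlonglongrightarrow> 0"
proof -
  define D where "D n s = f s (Y n s) - f s (X s)" for n s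
  have dom_Y: "dominated (\<psi> B) (\<lambda>s. f s (Y n s))" for n
    using dominated_superposition[OF Y] .
  have dom_X: "dominated (\<psi> B) (\<lambda>s. f s (X s))"
    using dominated_superposition[OF X] .
  have "bv_norm (F2 k f (Y n) - F2 k f X) = bv_norm (kernel_operator k (D n))" for n
    unfolding F2_eq_kernel_operator D_def
    by (rule bv_norm_cong) (simp add: kernel_operator_diff[OF dom_Y dom_X])
  moreover have "(\<lambda>n. bv_norm (kernel_operator k (D n))) \<longlonglongrightarrow> 0"
  proof (rule bv_norm_kernel_operator_tendsto_zero)
    show "dominated (\<psi> B + \<psi> B) (D n)" for n
      unfolding D_def by (rule dominated_diff[OF dom_Y dom_X])
    show "AE s in lebesgue. s \<in> {0..1} \<longrightarrow> (\<lambda>n. D n s) \<longlonglongrightarrow> 0"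
      using lim f_cont
    proof eventually_elim
      case (elim s)
      show ?case
      proof
        assume s: "s \<in> {0..1}"
        then have "isCont (f s) (X s)"
          using elim by (simp add: continuous_on_eq_continuous_at)
        moreover have "(\<lambda>n. Y n s) \<longlonglongrightarrow> X s"
          using elim s by blast
        ultimately have "(\<lambda>n. f s (Y n s)) \<longlonglongrightarrow> f s (X s)"
          by (rule isCont_tendsto_compose)
        then show "(\<lambda>n. D n s) \<longlonglongrightarrow> 0"
          unfolding D_def by (simp add: LIM_zero)
      qed
    qed
  qed
  ultimately show ?thesis by simp
qed

lemma F2_BV_CBV:
  assumes x: "x \<in> BV"
  shows "(\<forall>t\<in>{0..1}. set_integrable lebesgue {0..1} (\<lambda>s. k t s * f s (x s))) \<and> F2 k f x \<in> CBV"
proof -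
  note x_meas = BV_borel_measurable[OF x] and x_bound = abs_le_bv_norm[OF x]
  show ?thesis
    using kernel_integrable[OF _ dominated_superposition[OF x_meas x_bound]] F2_CBV[OF x_meas x_bound]
    by simp
qed

lemma F2_continuous:
  assumes x: "x \<in> BV" and \<epsilon>: "\<epsilon> > 0"
  shows "\<exists>\<delta>>0. \<forall>y\<in>BV. bv_norm (y - x) < \<delta> \<longrightarrow> bv_norm (F2 k f y - F2 k f x) < \<epsilon>"
proof (rule ccontr)
  assume "\<not> ?thesis"
  then have "\<forall>\<delta>>0. \<exists>y. y \<in> BV \<and> bv_norm (y - x) < \<delta> \<and> \<not> bv_norm (F2 k f y - F2 k f x) < \<epsilon>"
    by blast
  then have "\<forall>n. \<exists>y. y \<in> BV \<and> bv_norm (y - x) < 1 / Suc n \<and> \<not> bv_norm (F2 k f y - F2 k f x) < \<epsilon>"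
    by simp
  from choice[OF this] obtain Y where "\<forall>n. Y n \<in> BV \<and> bv_norm (Y n - x) < 1 / Suc n
      \<and> \<not> bv_norm (F2 k f (Y n) - F2 k f x) < \<epsilon>"
    by blast
  then have Y: "\<And>n. Y n \<in> BV" "\<And>n. bv_norm (Y n - x) < 1 / Suc n"
    "\<And>n. \<not> bv_norm (F2 k f (Y n) - F2 k f x) < \<epsilon>"
    by blast+
  have close: "\<bar>Y n s - x s\<bar> < 1 / Suc n" if "s \<in> {0..1}" for n s
    using abs_le_bv_norm[OF BV_diff[OF Y(1) x] that, of n] Y(2)[of n] by simp
  have bound_x: "\<bar>x s\<bar> \<le> bv_norm x + 1" if "s \<in> {0..1}" for s
    using abs_le_bv_norm[OF x that] by simp
  have bound_Y: "\<bar>Y n s\<bar> \<le> bv_norm x + 1" if "s \<in> {0..1}" for n s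
  proof -
    have "1 / real (Suc n) \<le> 1" by simp
    then show ?thesis
      using close[OF that, of n] abs_le_bv_norm[OF x that] by linarith
  qed
  have "(\<lambda>n. bv_norm (F2 k f (Y n) - F2 k f x)) \<longlonglongrightarrow> 0"
  proof (rule bv_norm_F2_diff_tendsto_zero[OF BV_borel_measurable[OF Y(1)] bound_Y BV_borel_measurable[OF x] bound_x])
    show "AE s in lebesgue. s \<in> {0..1} \<longrightarrow> (\<lambda>n. Y n s) \<longlonglongrightarrow> x s"
    proof (intro AE_I2 impI)
      fix s :: real assume "s \<in> {0..1}"
      then have "\<forall>n. norm (Y n s - x s) \<le> 1 / real (Suc n)"
        using close less_imp_le by auto
      then have "(\<lambda>n. Y n s - x s) \<longlonglongrightarrow> 0"
        by (rule Lim_null_comparison[OF always_eventually lim_1_over_n[THEN LIMSEQ_Suc]])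
      then show "(\<lambda>n. Y n s) \<longlonglongrightarrow> x s"
        by (simp add: LIM_zero_iff)
    qed
  qed
  then have "eventually (\<lambda>n. bv_norm (F2 k f (Y n) - F2 k f x) < \<epsilon>) sequentially"
    using \<epsilon> by (simp add: order_tendsto_iff)
  then obtain N where "\<forall>n\<ge>N. bv_norm (F2 k f (Y n) - F2 k f x) < \<epsilon>"
    unfolding eventually_sequentially ..
  with Y(3)[of N] show False
    by simp
qed

lemma F2_compact:
  fixes xs :: "nat \<Rightarrow> real \<Rightarrow> real"
  assumes "\<forall>n. xs n \<in> BV \<and> bv_norm (xs n) \<le> R"
  shows "\<exists>r g. strict_mono r \<and> g \<in> CBV \<and> (\<lambda>n. bv_norm (F2 k f (xs (r n)) - g)) \<longlonglongrightarrow> 0"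
proof -
  obtain r X where r: "strict_mono r" and X: "X \<in> borel_measurable lebesgue" "\<And>s. \<bar>X s\<bar> \<le> 3 * R"
    and lim: "AE s in lebesgue. s \<in> {0..1} \<longrightarrow> (\<lambda>n. xs (r n) s) \<longlonglongrightarrow> X s"
    using BV_Helly_selection[of xs R] assms by blast
  have X_meas: "set_borel_measurable lebesgue {0..1} X"
    using X(1) unfolding set_borel_measurable_def
    by (intro borel_measurable_scaleR borel_measurable_indicator) auto
  have xs_bound: "\<bar>xs n s\<bar> \<le> 3 * R" if "s \<in> {0..1}" for n s
  proof -
    have "\<bar>xs n s\<bar> \<le> R" "0 \<le> R"
      using abs_le_bv_norm[of "xs n" s] assms bv_norm_nonneg[of "xs n"] that by (auto intro: order_trans)
    then show ?thesis by linarith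
  qed
  have "(\<lambda>n. bv_norm (F2 k f (xs (r n)) - F2 k f X)) \<longlonglongrightarrow> 0"
    using assms BV_borel_measurable xs_bound X_meas X(2) lim
    by (intro bv_norm_F2_diff_tendsto_zero) auto
  with r F2_CBV[OF X_meas X(2)] show ?thesis
    by blast
qed

end

theorem lemma4p5:
  fixes p :: ereal and q :: real
    and f :: "real \<Rightarrow> real \<Rightarrow> real" and k :: "real \<Rightarrow> real \<Rightarrow> real"
    and \<psi> \<phi> m :: "real \<Rightarrow> real"
  assumes p_gt: "p > 1" and q_ge: "q \<ge> 1"
    and conj: "if p = \<infinity> then q = 1 else 1 / real_of_ereal p + 1 / q = 1"
    and f_meas: "\<And>u. set_borel_measurable lebesgue {0..1} (\<lambda>t. f t u)"
    and f_cont: "AE t in lebesgue. t \<in> {0..1} \<longrightarrow> continuous_on UNIV (f t)"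
    and psi_mono: "mono_on {0..} \<psi>" and psi_nonneg: "\<And>u. u \<ge> 0 \<Longrightarrow> \<psi> u \<ge> 0"
    and phi_Lp: "in_Lp p \<phi>" and phi_nonneg: "\<And>s. s \<in> {0..1} \<Longrightarrow> \<phi> s \<ge> 0"
    and f_bound: "\<And>t u. t \<in> {0..1} \<Longrightarrow> \<bar>f t u\<bar> \<le> \<phi> t * \<psi> \<bar>u\<bar>"
    and k_Lq: "\<And>t. t \<in> {0..1} \<Longrightarrow> in_Lp (ereal q) (k t)"
    and m_Lq: "in_Lp (ereal q) m" and m_nonneg: "\<And>s. s \<in> {0..1} \<Longrightarrow> m s \<ge> 0"
    and k_var: "AE s in lebesgue. s \<in> {0..1} \<longrightarrow> variation 0 1 (\<lambda>t. k t s) \<le> ereal (m s)"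
    and k_cont: "\<And>\<tau>. \<tau> \<in> {0..1} \<Longrightarrow>
        ((\<lambda>t. LINT s:{0..1}|lebesgue. \<bar>k t s - k \<tau> s\<bar> * \<phi> s) \<longlongrightarrow> 0) (at \<tau> within {0..1})"
  shows "(\<forall>x\<in>BV. (\<forall>t\<in>{0..1}. set_integrable lebesgue {0..1} (\<lambda>s. k t s * f s (x s)))
                  \<and> F2 k f x \<in> CBV)
       \<and> (\<forall>x\<in>BV. \<forall>\<epsilon>>0. \<exists>\<delta>>0. \<forall>y\<in>BV.
             bv_norm (y - x) < \<delta> \<longrightarrow> bv_norm (F2 k f y - F2 k f x) < \<epsilon>)
       \<and> (\<forall>xs :: nat \<Rightarrow> real \<Rightarrow> real. \<forall>R.
             (\<forall>n. xs n \<in> BV \<and> bv_norm (xs n) \<le> R) \<longrightarrow>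
             (\<exists>r g. strict_mono r \<and> g \<in> CBV \<and>
                 (\<lambda>n. bv_norm (F2 k f (xs (r n)) - g)) \<longlonglongrightarrow> 0))"
proof -
  interpret Hammerstein k m \<phi> f \<psi>
  proof unfold_locales
    show "set_integrable lebesgue {0..1} (\<lambda>s. k t s * \<phi> s)" if "t \<in> {0..1}" for t
      using set_integrable_mult_Lp_conjugate[OF p_gt conj phi_Lp k_Lq[OF that]] .
    show "set_integrable lebesgue {0..1} (\<lambda>s. m s * \<phi> s)"
      using set_integrable_mult_Lp_conjugate[OF p_gt conj phi_Lp m_Lq] .
    show "set_borel_measurable lebesgue {0..1} (k t)" if "t \<in> {0..1}" for t
      using k_Lq[OF that] unfolding in_Lp_def ..
    show "set_borel_measurable lebesgue {0..1} m"
      using m_Lq unfolding in_Lp_def ..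
  qed (fact phi_nonneg m_nonneg k_var k_cont f_meas f_cont psi_mono f_bound)+
  show ?thesis
    using F2_BV_CBV F2_continuous F2_compact by blast
qed

end
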